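(* Let $a\in\mathbb{C}\setminus\{0\}$, let $\omega$ be a valid weight, and let $V_a=M_{a-z}^*M_{a-z}$ act on $H^2_\omega$. Then $\sigma_{\mathrm p}(V_a)\subset(0,\infty)$.
   Context: A weight $\omega=\{\omega_n\}_{n\ge0}$ is called valid if it is a monotonic sequence of positive numbers with $\omega_0=1$, $\lim_{n\to\infty}\omega_{n+1}/\omega_n=1$ and $\sum_{n=0}^\infty(1-\omega_{n+1}/\omega_n)^2<\infty$. The weighted Hardy space $H^2_\omega$ is the Hilbert space of holomorphic functions $f(z)=\sum_{n\ge0}a_nz^n$ on the unit disc with $\|f\|_\omega^2=\sum_{n\ge0}|a_n|^2\omega_n<\infty$. $M_{a-z}$ denotes multiplication by $a-z$ on $H^2_\omega$ and $M_{a-z}^*$ its adjoint. $\sigma_{\mathrm p}$ denotes the point spectrum. *)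

theory Defs
  imports "HOL-Analysis.Analysis"
begin

definition valid_weight :: "(nat \<Rightarrow> real) \<Rightarrow> bool" where
  "valid_weight \<omega> \<longleftrightarrow>
     (mono \<omega> \<or> antimono \<omega>) \<and> (\<forall>n. \<omega> n > 0) \<and> \<omega> 0 = 1 \<and>
     (\<lambda>n. \<omega> (Suc n) / \<omega> n) \<longlonglongrightarrow> 1 \<and>
     summable (\<lambda>n. (1 - \<omega> (Suc n) / \<omega> n)\<^sup>2)"

text \<open>The weighted Hardy space, identified with the space of Taylor coefficient
  sequences f(z) = sum_n c n * z^n of its elements.\<close>
definition H2 :: "(nat \<Rightarrow> real) \<Rightarrow> (nat \<Rightarrow> complex) set" where
  "H2 \<omega> = {c. summable (\<lambda>n. (cmod (c n))\<^sup>2 * \<omega> n)}"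

definition winner :: "(nat \<Rightarrow> real) \<Rightarrow> (nat \<Rightarrow> complex) \<Rightarrow> (nat \<Rightarrow> complex) \<Rightarrow> complex" where
  "winner \<omega> f g = (\<Sum>n. f n * cnj (g n) * complex_of_real (\<omega> n))"

definition mult_az :: "complex \<Rightarrow> (nat \<Rightarrow> complex) \<Rightarrow> (nat \<Rightarrow> complex)" where
  "mult_az a c = (\<lambda>n. a * c n - (if n = 0 then 0 else c (n - 1)))"

definition hadjoint :: "(nat \<Rightarrow> real) \<Rightarrow> ((nat \<Rightarrow> complex) \<Rightarrow> (nat \<Rightarrow> complex))
    \<Rightarrow> (nat \<Rightarrow> complex) \<Rightarrow> (nat \<Rightarrow> complex)" where
  "hadjoint \<omega> T h = (THE k. k \<in> H2 \<omega> \<and> (\<forall>g \<in> H2 \<omega>. winner \<omega> k g = winner \<omega> h (T g)))"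

definition Va :: "(nat \<Rightarrow> real) \<Rightarrow> complex \<Rightarrow> (nat \<Rightarrow> complex) \<Rightarrow> (nat \<Rightarrow> complex)" where
  "Va \<omega> a = hadjoint \<omega> (mult_az a) \<circ> mult_az a"

definition point_spectrum :: "(nat \<Rightarrow> real) \<Rightarrow> ((nat \<Rightarrow> complex) \<Rightarrow> (nat \<Rightarrow> complex)) \<Rightarrow> complex set" where
  "point_spectrum \<omega> T = {\<mu>. \<exists>f \<in> H2 \<omega>. f \<noteq> (\<lambda>_. 0) \<and> T f = (\<lambda>n. \<mu> * f n)}"

end

theory Submission
  imports Defs
begin

(* If V_a f = \<mu> f with f \<noteq> 0, then \<mu> <f, f> = <M\<^sup>* M f, f> = <M f, M f>, where M is
   multiplication by a - z; M f \<noteq> 0 because a \<noteq> 0 makes M injective on power series,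
   so \<mu> is a quotient of two positive reals.  Since the adjoint is given by a definite
   description, it has to be exhibited: M\<^sup>* = cnj a - S\<^sup>*, where S\<^sup>* is the weighted backward
   shift (S\<^sup>* h) n = \<omega> (n + 1) / \<omega> n * h (n + 1), which is bounded because the ratios
   \<omega> (n + 1) / \<omega> n converge. *)

lemma H2_scale:
  assumes "f \<in> H2 \<omega>"
  shows "(\<lambda>n. c * f n) \<in> H2 \<omega>"
proof -
  have "summable (\<lambda>n. (cmod c)\<^sup>2 * ((cmod (f n))\<^sup>2 * \<omega> n))"
    using assms by (intro summable_mult) (simp add: H2_def)
  then show ?thesis by (simp add: H2_def norm_mult power_mult_distrib mult.assoc)
qed

definition mult_z :: "(nat \<Rightarrow> complex) \<Rightarrow> nat \<Rightarrow> complex" where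
  "mult_z f n = (if n = 0 then 0 else f (n - 1))"

definition mult_z_adj :: "(nat \<Rightarrow> real) \<Rightarrow> (nat \<Rightarrow> complex) \<Rightarrow> nat \<Rightarrow> complex" where
  "mult_z_adj \<omega> h n = complex_of_real (\<omega> (Suc n) / \<omega> n) * h (Suc n)"

lemma mult_az_eq: "mult_az a f = (\<lambda>n. a * f n - mult_z f n)"
  by (simp add: mult_az_def mult_z_def fun_eq_iff)

lemma mult_az_eq_zeroD:
  assumes "a \<noteq> 0" and "mult_az a f = (\<lambda>_. 0)"
  shows "f = (\<lambda>_. 0)"
proof -
  have "f n = 0" for n
  proof (induction n)
    case 0
    then show ?case using fun_cong[OF assms(2), of 0] assms(1) by (simp add: mult_az_def)
  next
    case (Suc n)
    then show ?case using fun_cong[OF assms(2), of "Suc n"] assms(1) by (simp add: mult_az_def)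
  qed
  then show ?thesis by auto
qed

lemma valid_weight_ratio_bounded:
  assumes "valid_weight \<omega>"
  obtains C where "\<And>n. \<omega> (Suc n) \<le> C * \<omega> n"
proof -
  have pos: "\<And>n. 0 < \<omega> n" and "(\<lambda>n. \<omega> (Suc n) / \<omega> n) \<longlonglongrightarrow> 1"
    using assms by (auto simp: valid_weight_def)
  then have "Bseq (\<lambda>n. \<omega> (Suc n) / \<omega> n)" by (intro convergent_imp_Bseq convergentI)
  then obtain C where C: "\<forall>n. norm (\<omega> (Suc n) / \<omega> n) \<le> C" by (rule BseqE)
  have "\<omega> (Suc n) \<le> C * \<omega> n" for n
    using C[rule_format, of n] pos[of n] by (simp add: abs_le_iff pos_divide_le_eq)
  then show thesis by (rule that)
qed

locale positive_weight =
  fixes \<omega> :: "nat \<Rightarrow> real"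
  assumes weight_pos: "\<And>n. 0 < \<omega> n"
begin

lemma weight_nonzero [simp]: "\<omega> n \<noteq> 0"
  using weight_pos[of n] by simp

lemma H2_add:
  assumes f: "f \<in> H2 \<omega>" and g: "g \<in> H2 \<omega>"
  shows "(\<lambda>n. f n + g n) \<in> H2 \<omega>"
proof -
  have "summable (\<lambda>n. 2 * ((cmod (f n))\<^sup>2 * \<omega> n) + 2 * ((cmod (g n))\<^sup>2 * \<omega> n))"
    using assms by (intro summable_add summable_mult) (auto simp: H2_def)
  then have "summable (\<lambda>n. (cmod (f n + g n))\<^sup>2 * \<omega> n)"
  proof (rule summable_comparison_test')
    fix n
    have "(cmod (f n + g n))\<^sup>2 \<le> (cmod (f n) + cmod (g n))\<^sup>2"
      by (simp add: norm_triangle_ineq power_mono)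
    also have "\<dots> \<le> 2 * (cmod (f n))\<^sup>2 + 2 * (cmod (g n))\<^sup>2"
      using sum_squares_bound[of "cmod (f n)" "cmod (g n)"] by (simp add: power2_sum)
    finally have "(cmod (f n + g n))\<^sup>2 \<le> 2 * (cmod (f n))\<^sup>2 + 2 * (cmod (g n))\<^sup>2" .
    from mult_right_mono[OF this less_imp_le[OF weight_pos[of n]]]
    show "norm ((cmod (f n + g n))\<^sup>2 * \<omega> n)
        \<le> 2 * ((cmod (f n))\<^sup>2 * \<omega> n) + 2 * ((cmod (g n))\<^sup>2 * \<omega> n)"
      using weight_pos[of n] by (simp add: algebra_simps)
  qed
  then show ?thesis by (simp add: H2_def)
qed

lemma H2_diff:
  assumes "f \<in> H2 \<omega>" and "g \<in> H2 \<omega>"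
  shows "(\<lambda>n. f n - g n) \<in> H2 \<omega>"
  using H2_add[OF assms(1) H2_scale[OF assms(2), of "-1"]] by simp

lemma winner_summable:
  assumes f: "f \<in> H2 \<omega>" and g: "g \<in> H2 \<omega>"
  shows "summable (\<lambda>n. f n * cnj (g n) * complex_of_real (\<omega> n))"
proof (rule summable_norm_cancel)
  have "summable (\<lambda>n. (cmod (f n))\<^sup>2 * \<omega> n + (cmod (g n))\<^sup>2 * \<omega> n)"
    using assms by (intro summable_add) (auto simp: H2_def)
  then show "summable (\<lambda>n. norm (f n * cnj (g n) * complex_of_real (\<omega> n)))"
  proof (rule summable_comparison_test')
    fix n
    have "cmod (f n) * cmod (g n) \<le> (cmod (f n))\<^sup>2 + (cmod (g n))\<^sup>2"
      using sum_squares_bound[of "cmod (f n)" "cmod (g n)"]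
        mult_nonneg_nonneg[OF norm_ge_zero norm_ge_zero, of "f n" "g n"] by linarith
    then show "norm (norm (f n * cnj (g n) * complex_of_real (\<omega> n)))
        \<le> (cmod (f n))\<^sup>2 * \<omega> n + (cmod (g n))\<^sup>2 * \<omega> n"
      using weight_pos[of n] by (simp add: norm_mult abs_mult mult_right_mono flip: distrib_right)
  qed
qed

lemma winner_diff_left:
  assumes "x \<in> H2 \<omega>" "y \<in> H2 \<omega>" "g \<in> H2 \<omega>"
  shows "winner \<omega> (\<lambda>n. x n - y n) g = winner \<omega> x g - winner \<omega> y g"
  unfolding winner_def
  using suminf_diff[OF winner_summable[OF assms(1,3)] winner_summable[OF assms(2,3)]]
  by (simp add: left_diff_distrib)

lemma winner_scale_left:
  assumes "x \<in> H2 \<omega>" "g \<in> H2 \<omega>"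
  shows "winner \<omega> (\<lambda>n. c * x n) g = c * winner \<omega> x g"
  unfolding winner_def
  using suminf_mult[OF winner_summable[OF assms], of c] by (simp add: mult.assoc)

lemma winner_lincomb_right:
  assumes "h \<in> H2 \<omega>" "x \<in> H2 \<omega>" "y \<in> H2 \<omega>"
  shows "winner \<omega> h (\<lambda>n. c * x n - y n) = cnj c * winner \<omega> h x - winner \<omega> h y"
proof -
  have "winner \<omega> h (\<lambda>n. c * x n - y n) = (\<Sum>n. cnj c * (h n * cnj (x n) * complex_of_real (\<omega> n))
      - h n * cnj (y n) * complex_of_real (\<omega> n))"
    unfolding winner_def by (simp add: algebra_simps)
  also have "\<dots> = cnj c * winner \<omega> h x - winner \<omega> h y"
    unfolding winner_def
    using suminf_diff[OF summable_mult[OF winner_summable[OF assms(1,2)]] winner_summable[OF assms(1,3)]]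
      suminf_mult[OF winner_summable[OF assms(1,2)]]
    by simp
  finally show ?thesis .
qed

lemma winner_self_pos:
  assumes "x \<in> H2 \<omega>" and "x \<noteq> (\<lambda>_. 0)"
  obtains r where "r > 0" and "winner \<omega> x x = complex_of_real r"
proof
  have s: "summable (\<lambda>n. (cmod (x n))\<^sup>2 * \<omega> n)" using assms(1) by (simp add: H2_def)
  have "winner \<omega> x x = (\<Sum>n. complex_of_real ((cmod (x n))\<^sup>2 * \<omega> n))"
    unfolding winner_def by (simp only: complex_norm_square of_real_mult)
  also have "\<dots> = complex_of_real (\<Sum>n. (cmod (x n))\<^sup>2 * \<omega> n)"
    using suminf_of_real[where 'a=complex, OF s] by simp
  finally show "winner \<omega> x x = complex_of_real (\<Sum>n. (cmod (x n))\<^sup>2 * \<omega> n)" .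
  obtain i where "x i \<noteq> 0" using assms(2) by auto
  then have "(cmod (x i))\<^sup>2 * \<omega> i > 0" using weight_pos[of i] by simp
  then show "(\<Sum>n. (cmod (x n))\<^sup>2 * \<omega> n) > 0"
    using suminf_pos_iff[OF s] weight_pos by (meson less_imp_le mult_nonneg_nonneg zero_le_power2)
qed

lemma winner_left_unique:
  assumes k: "k \<in> H2 \<omega>" and k': "k' \<in> H2 \<omega>"
    and eq: "\<And>g. g \<in> H2 \<omega> \<Longrightarrow> winner \<omega> k g = winner \<omega> k' g"
  shows "k = k'"
proof (rule ccontr)
  define d where "d = (\<lambda>n. k n - k' n)"
  have d: "d \<in> H2 \<omega>" unfolding d_def using H2_diff[OF k k'] .
  assume "k \<noteq> k'"
  then have "d \<noteq> (\<lambda>_. 0)" by (auto simp: d_def fun_eq_iff)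
  then obtain r where "r > 0" and "winner \<omega> d d = complex_of_real r"
    using winner_self_pos[OF d] by blast
  moreover have "winner \<omega> d d = 0"
    unfolding d_def using winner_diff_left[OF k k' d] eq[OF d] by (simp add: d_def)
  ultimately show False by simp
qed

lemma hadjoint_eqI:
  assumes "k \<in> H2 \<omega>" and "\<And>g. g \<in> H2 \<omega> \<Longrightarrow> winner \<omega> k g = winner \<omega> h (T g)"
  shows "hadjoint \<omega> T h = k"
  unfolding hadjoint_def
proof (rule the_equality)
  show "k \<in> H2 \<omega> \<and> (\<forall>g\<in>H2 \<omega>. winner \<omega> k g = winner \<omega> h (T g))" using assms by blast
  show "k' = k" if "k' \<in> H2 \<omega> \<and> (\<forall>g\<in>H2 \<omega>. winner \<omega> k' g = winner \<omega> h (T g))" for k'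
    using winner_left_unique[of k' k] that assms by simp
qed

lemma point_spectrum_hadjoint_comp_subset:
  assumes maps: "\<And>f. f \<in> H2 \<omega> \<Longrightarrow> T f \<in> H2 \<omega>"
    and inj: "\<And>f. f \<in> H2 \<omega> \<Longrightarrow> T f = (\<lambda>_. 0) \<Longrightarrow> f = (\<lambda>_. 0)"
    and adj: "\<And>h. h \<in> H2 \<omega> \<Longrightarrow> \<exists>k \<in> H2 \<omega>. \<forall>g \<in> H2 \<omega>. winner \<omega> k g = winner \<omega> h (T g)"
  shows "point_spectrum \<omega> (hadjoint \<omega> T \<circ> T) \<subseteq> complex_of_real ` {0<..}"
proof
  fix \<mu> assume "\<mu> \<in> point_spectrum \<omega> (hadjoint \<omega> T \<circ> T)"
  then obtain f where f: "f \<in> H2 \<omega>" "f \<noteq> (\<lambda>_. 0)"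
    and eigen: "hadjoint \<omega> T (T f) = (\<lambda>n. \<mu> * f n)"
    by (auto simp: point_spectrum_def)
  have Tf: "T f \<in> H2 \<omega>" "T f \<noteq> (\<lambda>_. 0)" using maps inj f by auto
  obtain k where k: "k \<in> H2 \<omega>" "\<And>g. g \<in> H2 \<omega> \<Longrightarrow> winner \<omega> k g = winner \<omega> (T f) (T g)"
    using adj[OF Tf(1)] by blast
  obtain r where r: "r > 0" "winner \<omega> f f = complex_of_real r"
    using winner_self_pos[OF f] .
  obtain s where s: "s > 0" "winner \<omega> (T f) (T f) = complex_of_real s"
    using winner_self_pos[OF Tf] .
  have "\<mu> * complex_of_real r = winner \<omega> (\<lambda>n. \<mu> * f n) f"
    using winner_scale_left[OF f(1) f(1)] r by simp
  also have "\<dots> = winner \<omega> (T f) (T f)"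
    using eigen hadjoint_eqI[OF k] k(2)[OF f(1)] by simp
  finally have "\<mu> = complex_of_real (s / r)"
    using r s by (simp add: field_simps)
  moreover have "s / r \<in> {0<..}" using r s by simp
  ultimately show "\<mu> \<in> complex_of_real ` {0<..}" by blast
qed

end

locale ratio_bounded_weight = positive_weight +
  fixes C :: real
  assumes weight_ratio_le: "\<And>n. \<omega> (Suc n) \<le> C * \<omega> n"
begin

lemma H2_mult_z:
  assumes "f \<in> H2 \<omega>"
  shows "mult_z f \<in> H2 \<omega>"
proof -
  have "summable (\<lambda>n. C * ((cmod (f n))\<^sup>2 * \<omega> n))"
    using assms by (intro summable_mult) (simp add: H2_def)
  then have "summable (\<lambda>n. (cmod (mult_z f (Suc n)))\<^sup>2 * \<omega> (Suc n))"
  proof (rule summable_comparison_test')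
    fix n
    show "norm ((cmod (mult_z f (Suc n)))\<^sup>2 * \<omega> (Suc n)) \<le> C * ((cmod (f n))\<^sup>2 * \<omega> n)"
      using mult_left_mono[OF weight_ratio_le[of n], of "(cmod (f n))\<^sup>2"] weight_pos[of "Suc n"]
      by (simp add: mult_z_def algebra_simps)
  qed
  then show ?thesis
    using summable_Suc_iff[of "\<lambda>n. (cmod (mult_z f n))\<^sup>2 * \<omega> n"] by (simp add: H2_def)
qed

lemma H2_mult_z_adj:
  assumes "h \<in> H2 \<omega>"
  shows "mult_z_adj \<omega> h \<in> H2 \<omega>"
proof -
  have "summable (\<lambda>n. C * ((cmod (h (Suc n)))\<^sup>2 * \<omega> (Suc n)))"
    using assms summable_Suc_iff[of "\<lambda>n. (cmod (h n))\<^sup>2 * \<omega> n"]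
    by (intro summable_mult) (simp add: H2_def)
  then have "summable (\<lambda>n. (cmod (mult_z_adj \<omega> h n))\<^sup>2 * \<omega> n)"
  proof (rule summable_comparison_test')
    fix n
    have "(cmod (mult_z_adj \<omega> h n))\<^sup>2 * \<omega> n
        = (\<omega> (Suc n) / \<omega> n) * ((cmod (h (Suc n)))\<^sup>2 * \<omega> (Suc n))"
      using weight_pos[of n] weight_pos[of "Suc n"]
      by (simp add: mult_z_adj_def norm_mult norm_divide abs_of_pos power2_eq_square)
    also have "\<dots> \<le> C * ((cmod (h (Suc n)))\<^sup>2 * \<omega> (Suc n))"
      using weight_ratio_le[of n] weight_pos[of n] weight_pos[of "Suc n"]
      by (intro mult_right_mono) (simp_all add: pos_divide_le_eq)
    finally show "norm ((cmod (mult_z_adj \<omega> h n))\<^sup>2 * \<omega> n)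
        \<le> C * ((cmod (h (Suc n)))\<^sup>2 * \<omega> (Suc n))"
      using weight_pos[of n] by simp
  qed
  then show ?thesis by (simp add: H2_def)
qed

lemma winner_mult_z_adj:
  assumes h: "h \<in> H2 \<omega>" and g: "g \<in> H2 \<omega>"
  shows "winner \<omega> (mult_z_adj \<omega> h) g = winner \<omega> h (mult_z g)"
proof -
  define t where "t = (\<lambda>n. h n * cnj (mult_z g n) * complex_of_real (\<omega> n))"
  have t: "summable t"
    unfolding t_def using winner_summable[OF h H2_mult_z[OF g]] .
  have "winner \<omega> (mult_z_adj \<omega> h) g = (\<Sum>n. t (Suc n))"
    unfolding winner_def t_def
    by (intro arg_cong[where f=suminf] ext) (simp add: mult_z_adj_def mult_z_def field_simps)
  also have "\<dots> = suminf t - t 0"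
    using suminf_split_head[OF t] .
  also have "\<dots> = winner \<omega> h (mult_z g)"
    by (simp add: t_def mult_z_def winner_def)
  finally show ?thesis .
qed

lemma H2_mult_az:
  assumes "f \<in> H2 \<omega>"
  shows "mult_az a f \<in> H2 \<omega>"
  unfolding mult_az_eq using H2_diff[OF H2_scale[OF assms] H2_mult_z[OF assms]] .

lemma mult_az_has_adjoint:
  assumes h: "h \<in> H2 \<omega>"
  shows "\<exists>k \<in> H2 \<omega>. \<forall>g \<in> H2 \<omega>. winner \<omega> k g = winner \<omega> h (mult_az a g)"
proof (intro bexI ballI)
  show "(\<lambda>n. cnj a * h n - mult_z_adj \<omega> h n) \<in> H2 \<omega>"
    using H2_diff[OF H2_scale[OF h] H2_mult_z_adj[OF h]] .
  show "winner \<omega> (\<lambda>n. cnj a * h n - mult_z_adj \<omega> h n) g = winner \<omega> h (mult_az a g)"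
    if g: "g \<in> H2 \<omega>" for g
    unfolding mult_az_eq
    using winner_diff_left[OF H2_scale[OF h] H2_mult_z_adj[OF h] g] winner_scale_left[OF h g]
      winner_mult_z_adj[OF h g] winner_lincomb_right[OF h g H2_mult_z[OF g]]
    by simp
qed

end

theorem corollary4p2:
  fixes a :: complex and \<omega> :: "nat \<Rightarrow> real"
  assumes "a \<noteq> 0" and "valid_weight \<omega>"
  shows "point_spectrum \<omega> (Va \<omega> a) \<subseteq> complex_of_real ` {0<..}"
proof -
  obtain C where "\<And>n. \<omega> (Suc n) \<le> C * \<omega> n"
    using valid_weight_ratio_bounded[OF assms(2)] by blast
  moreover have "\<And>n. 0 < \<omega> n" using assms(2) by (simp add: valid_weight_def)
  ultimately interpret ratio_bounded_weight \<omega> C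
    by unfold_locales
  show ?thesis
    unfolding Va_def
    by (rule point_spectrum_hadjoint_comp_subset[OF H2_mult_az mult_az_eq_zeroD[OF assms(1)]
          mult_az_has_adjoint])
qed

end
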